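(* Let $G$ be a two-step nilpotent group and let $a,b,c,d,m,n$ be integers. If $S\colon G^2\to G^2$, $S(x,y)=\bigl(x^ay^b[y,x]^m,\;x^cy^d[y,x]^n\bigr)$, is a solution of the Yang--Baxter equation on $G$, then $\bar S\colon G^2\to G^2$, $\bar S(x,y)=\bigl(x^dy^c[y,x]^{dc-n},\;x^by^a[y,x]^{ab-m}\bigr)$, is also a solution of the Yang--Baxter equation on $G$.
   Context: A two-step nilpotent group is a group of nilpotency class at most $2$ (all commutators central); commutators are $[x,y]=x^{-1}y^{-1}xy$. A map $S\colon X^2\to X^2$ is a solution of the Yang--Baxter equation on $X$ if $S_1S_2S_1=S_2S_1S_2$ on $X^3$, where $S_1=S\times\mathrm{Id}$, $S_2=\mathrm{Id}\times S$. *)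

theory Defs
  imports "HOL-Algebra.Group"
begin

definition commutator :: "('a, 'b) monoid_scheme \<Rightarrow> 'a \<Rightarrow> 'a \<Rightarrow> 'a" where
  "commutator G x y = inv\<^bsub>G\<^esub> x \<otimes>\<^bsub>G\<^esub> inv\<^bsub>G\<^esub> y \<otimes>\<^bsub>G\<^esub> x \<otimes>\<^bsub>G\<^esub> y"

definition two_step_nilpotent :: "('a, 'b) monoid_scheme \<Rightarrow> bool" where
  "two_step_nilpotent G \<longleftrightarrow> group G \<and>
     (\<forall>x\<in>carrier G. \<forall>y\<in>carrier G. \<forall>z\<in>carrier G.
        commutator G x y \<otimes>\<^bsub>G\<^esub> z = z \<otimes>\<^bsub>G\<^esub> commutator G x y)"

definition S1 :: "('a \<times> 'a \<Rightarrow> 'a \<times> 'a) \<Rightarrow> 'a \<times> 'a \<times> 'a \<Rightarrow> 'a \<times> 'a \<times> 'a" where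
  "S1 S t = (case t of (x, y, z) \<Rightarrow> (fst (S (x, y)), snd (S (x, y)), z))"

definition S2 :: "('a \<times> 'a \<Rightarrow> 'a \<times> 'a) \<Rightarrow> 'a \<times> 'a \<times> 'a \<Rightarrow> 'a \<times> 'a \<times> 'a" where
  "S2 S t = (case t of (x, y, z) \<Rightarrow> (x, fst (S (y, z)), snd (S (y, z))))"

definition YBE_solution :: "'a set \<Rightarrow> ('a \<times> 'a \<Rightarrow> 'a \<times> 'a) \<Rightarrow> bool" where
  "YBE_solution X S \<longleftrightarrow>
     (\<forall>p\<in>X \<times> X. S p \<in> X \<times> X) \<and>
     (\<forall>t\<in>X \<times> X \<times> X. S1 S (S2 S (S1 S t)) = S2 S (S1 S (S2 S t)))"

end

theory Submission
  imports Defs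
begin

text \<open>The map in the conclusion is \<open>\<tau> \<circ> S \<circ> \<tau>\<close> for the flip \<open>\<tau>(x, y) = (y, x)\<close>:
  since commutators are central and bimultiplicative,
  \<open>y [^] c \<otimes> x [^] d \<otimes> [x,y] [^] n = x [^] d \<otimes> y [^] c \<otimes> [y,x] [^] (d c - n)\<close>.
  Conjugating a solution by the flip gives again a solution, because reversing triples,
  \<open>(x, y, z) \<mapsto> (z, y, x)\<close>, conjugates \<open>(\<tau> S \<tau>)\<^sub>1\<close> to \<open>S\<^sub>2\<close> and \<open>(\<tau> S \<tau>)\<^sub>2\<close> to \<open>S\<^sub>1\<close>.\<close>

definition reverse_triple :: "'a \<times> 'a \<times> 'a \<Rightarrow> 'a \<times> 'a \<times> 'a" where
  "reverse_triple t = (case t of (x, y, z) \<Rightarrow> (z, y, x))"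

lemma reverse_triple_reverse_triple [simp]: "reverse_triple (reverse_triple t) = t"
  by (cases t) (simp add: reverse_triple_def)

lemma reverse_triple_mem_iff [simp]: "reverse_triple t \<in> X \<times> X \<times> X \<longleftrightarrow> t \<in> X \<times> X \<times> X"
  by (cases t) (auto simp: reverse_triple_def)

lemma S1_closed: "(\<forall>p\<in>X \<times> X. S p \<in> X \<times> X) \<Longrightarrow> t \<in> X \<times> X \<times> X \<Longrightarrow> S1 S t \<in> X \<times> X \<times> X"
  by (cases t) (auto simp: S1_def mem_Times_iff)

lemma S2_closed: "(\<forall>p\<in>X \<times> X. S p \<in> X \<times> X) \<Longrightarrow> t \<in> X \<times> X \<times> X \<Longrightarrow> S2 S t \<in> X \<times> X \<times> X"
  by (cases t) (auto simp: S2_def mem_Times_iff)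

lemma YBE_solution_flip_conjugate:
  assumes S: "YBE_solution X S"
    and T: "\<And>x y. x \<in> X \<Longrightarrow> y \<in> X \<Longrightarrow> T (x, y) = (snd (S (y, x)), fst (S (y, x)))"
  shows "YBE_solution X T"
proof -
  have closed: "\<forall>p\<in>X \<times> X. S p \<in> X \<times> X" and braid: "\<And>t. t \<in> X \<times> X \<times> X \<Longrightarrow>
      S1 S (S2 S (S1 S t)) = S2 S (S1 S (S2 S t))"
    using S by (auto simp: YBE_solution_def)
  have S1_T: "S1 T t = reverse_triple (S2 S (reverse_triple t))" if "t \<in> X \<times> X \<times> X" for t
    using that by (auto simp: S1_def S2_def reverse_triple_def T case_prod_unfold)
  have S2_T: "S2 T t = reverse_triple (S1 S (reverse_triple t))" if "t \<in> X \<times> X \<times> X" for t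
    using that by (auto simp: S1_def S2_def reverse_triple_def T case_prod_unfold)
  have "T p \<in> X \<times> X" if "p \<in> X \<times> X" for p
    using that closed T by (cases p) (auto simp: mem_Times_iff)
  moreover have "S1 T (S2 T (S1 T t)) = S2 T (S1 T (S2 T t))" if t: "t \<in> X \<times> X \<times> X" for t
  proof -
    let ?r = "reverse_triple t"
    have r: "?r \<in> X \<times> X \<times> X"
      using t by simp
    have "S1 T (S2 T (S1 T t)) = reverse_triple (S2 S (S1 S (S2 S ?r)))"
      using r by (simp add: S1_T S2_T S1_closed[OF closed] S2_closed[OF closed])
    also have "\<dots> = reverse_triple (S1 S (S2 S (S1 S ?r)))"
      using braid[OF r] by simp
    also have "\<dots> = S2 T (S1 T (S2 T t))"
      using r by (simp add: S1_T S2_T S1_closed[OF closed] S2_closed[OF closed])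
    finally show ?thesis .
  qed
  ultimately show ?thesis
    unfolding YBE_solution_def by blast
qed

lemma (in group) m_inv_cancel_left [simp]:
  "x \<in> carrier G \<Longrightarrow> y \<in> carrier G \<Longrightarrow> x \<otimes> (inv x \<otimes> y) = y"
  by (simp add: m_assoc[symmetric])

locale two_step_nilpotent_group = group +
  assumes commutator_central: "\<And>x y z. x \<in> carrier G \<Longrightarrow> y \<in> carrier G \<Longrightarrow> z \<in> carrier G \<Longrightarrow>
    commutator G x y \<otimes> z = z \<otimes> commutator G x y"

lemma two_step_nilpotent_groupI: "two_step_nilpotent G \<Longrightarrow> two_step_nilpotent_group G"
  unfolding two_step_nilpotent_def two_step_nilpotent_group_def two_step_nilpotent_group_axioms_def
  by blast

context two_step_nilpotent_group
begin

lemma commutator_closed [simp]: "x \<in> carrier G \<Longrightarrow> y \<in> carrier G \<Longrightarrow> commutator G x y \<in> carrier G"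
  by (simp add: commutator_def)

lemma m_comm_commutator: "x \<in> carrier G \<Longrightarrow> y \<in> carrier G \<Longrightarrow> y \<otimes> x = x \<otimes> y \<otimes> commutator G y x"
  by (simp add: commutator_def m_assoc)

lemma conjugate_eq_commutator: "x \<in> carrier G \<Longrightarrow> z \<in> carrier G \<Longrightarrow> inv z \<otimes> x \<otimes> z = x \<otimes> commutator G x z"
  by (simp add: commutator_def m_assoc)

lemma commutator_swap: "x \<in> carrier G \<Longrightarrow> y \<in> carrier G \<Longrightarrow> commutator G y x = inv (commutator G x y)"
  by (simp add: commutator_def m_assoc inv_mult_group)

lemma commutator_int_pow_left:
  assumes x: "x \<in> carrier G" and z: "z \<in> carrier G"
  shows "commutator G (x [^] (k::int)) z = commutator G x z [^] k"
proof -
  have "(\<lambda>u. inv z \<otimes> u \<otimes> z) \<in> hom G G"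
    unfolding hom_def using z by (auto simp: m_assoc)
  from hom_int_pow[OF this x is_group is_group]
  have "inv z \<otimes> x [^] k \<otimes> z = (inv z \<otimes> x \<otimes> z) [^] k"
    by simp
  also have "\<dots> = (x \<otimes> commutator G x z) [^] k"
    using x z by (simp add: conjugate_eq_commutator)
  also have "\<dots> = x [^] k \<otimes> commutator G x z [^] k"
    using x z by (simp add: int_pow_mult_distrib commutator_central)
  finally have conj: "inv z \<otimes> x [^] k \<otimes> z = x [^] k \<otimes> commutator G x z [^] k" .
  have "commutator G (x [^] k) z = inv (x [^] k) \<otimes> (inv z \<otimes> x [^] k \<otimes> z)"
    using x z by (simp add: commutator_def m_assoc)
  also have "\<dots> = commutator G x z [^] k"
    using x z by (simp add: conj m_assoc[symmetric])
  finally show ?thesis .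
qed

lemma commutator_int_pow_right:
  "x \<in> carrier G \<Longrightarrow> y \<in> carrier G \<Longrightarrow> commutator G y (x [^] (k::int)) = commutator G y x [^] k"
  by (simp add: commutator_swap[of "x [^] k" y] commutator_swap[of x y] commutator_int_pow_left
      int_pow_inv)

lemma int_pow_swap_commutator:
  assumes x: "x \<in> carrier G" and y: "y \<in> carrier G"
  shows "y [^] (c::int) \<otimes> x [^] (d::int) \<otimes> commutator G x y [^] (n::int)
       = x [^] d \<otimes> y [^] c \<otimes> commutator G y x [^] (d * c - n)"
proof -
  have "y [^] c \<otimes> x [^] d = x [^] d \<otimes> y [^] c \<otimes> commutator G (y [^] c) (x [^] d)"
    using x y by (intro m_comm_commutator) simp_all
  also have "commutator G (y [^] c) (x [^] d) = commutator G y x [^] (d * c)"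
    using x y by (simp add: commutator_int_pow_left commutator_int_pow_right int_pow_pow mult.commute)
  finally have "y [^] c \<otimes> x [^] d = x [^] d \<otimes> y [^] c \<otimes> commutator G y x [^] (d * c)" .
  moreover have "commutator G x y [^] n = commutator G y x [^] (- n)"
    using x y by (simp add: commutator_swap[of y x] int_pow_inv int_pow_neg)
  ultimately show ?thesis
    using x y by (simp add: m_assoc int_pow_mult[symmetric])
qed

end

theorem corollary5p12:
  fixes G :: "('g, 'b) monoid_scheme" and a b c d m n :: int
  assumes "two_step_nilpotent G"
    and "YBE_solution (carrier G)
           (\<lambda>(x, y). (x [^]\<^bsub>G\<^esub> a \<otimes>\<^bsub>G\<^esub> y [^]\<^bsub>G\<^esub> b \<otimes>\<^bsub>G\<^esub> commutator G y x [^]\<^bsub>G\<^esub> m,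
                       x [^]\<^bsub>G\<^esub> c \<otimes>\<^bsub>G\<^esub> y [^]\<^bsub>G\<^esub> d \<otimes>\<^bsub>G\<^esub> commutator G y x [^]\<^bsub>G\<^esub> n))"
  shows "YBE_solution (carrier G)
           (\<lambda>(x, y). (x [^]\<^bsub>G\<^esub> d \<otimes>\<^bsub>G\<^esub> y [^]\<^bsub>G\<^esub> c \<otimes>\<^bsub>G\<^esub> commutator G y x [^]\<^bsub>G\<^esub> (d * c - n),
                       x [^]\<^bsub>G\<^esub> b \<otimes>\<^bsub>G\<^esub> y [^]\<^bsub>G\<^esub> a \<otimes>\<^bsub>G\<^esub> commutator G y x [^]\<^bsub>G\<^esub> (a * b - m)))"
proof -
  interpret two_step_nilpotent_group G
    using assms(1) by (rule two_step_nilpotent_groupI)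
  show ?thesis
    using assms(2) by (rule YBE_solution_flip_conjugate)
      (simp add: int_pow_swap_commutator[of _ _ c d n] int_pow_swap_commutator[of _ _ a b m]
        mult.commute)
qed

end
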